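(* For $n\ge3$, let $n$-Go denote the equation $a_1\overset{\gamma}{\equiv}a_n=a_n\overset{\gamma}{\equiv}a_1$. Then: (i) for every $n\ge3$, $n$-Go holds in every ortholattice that admits a strong set of states; (ii) every ortholattice satisfying $n$-Go (for any $n\ge3$) is orthomodular; (iii) for every $n\ge 3$, there is an orthomodular lattice in which $n$-Go fails.
   Context: An ortholattice (OL) is a bounded lattice with an operation $'$ satisfying $a''=a$, $a\le b\Rightarrow b'\le a'$, $a\cap a'=0$ and $a\cup a'=1$. An orthomodular lattice is an OL in which $a\le b$ implies $b=a\cup(a'\cap b)$. Write $a\to b=a'\cup(a\cap b)$ and $a\perp b$ for $a\le b'$. The Godowski identity is $$a_1\overset{\gamma}{\equiv}a_n=(a_1\to a_2)\cap(a_2\to a_3)\cap\cdots\cap(a_{n-1}\to a_n)\cap(a_n\to a_1),$$ and $$a_n\overset{\gamma}{\equiv}a_1=(a_n\to a_{n-1})\cap(a_{n-1}\to a_{n-2})\cap\cdots\cap(a_2\to a_1)\cap(a_1\to a_n).$$ A state on an OL $L$ is a map $m:L\to[0,1]$ with $m(1)=1$ and $a\perp b\Rightarrow m(a\cup b)=m(a)+m(b)$. $L$ admits a strong set of states if there is a nonempty set $S$ of states such that for all $a,b\in L$ with $a\not\le b$ some $m\in S$ has $m(a)=1$ and $m(b)\neq1$. *)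

theory Defs
  imports Complex_Main
begin

record 'a ol =
  carrier :: "'a set"
  le :: "'a \<Rightarrow> 'a \<Rightarrow> bool"
  meet :: "'a \<Rightarrow> 'a \<Rightarrow> 'a"
  join :: "'a \<Rightarrow> 'a \<Rightarrow> 'a"
  compl :: "'a \<Rightarrow> 'a"
  zero :: 'a
  one :: 'a

definition bounded_lattice_on :: "('a, 'b) ol_scheme \<Rightarrow> bool" where
  "bounded_lattice_on L \<longleftrightarrow>
     zero L \<in> carrier L \<and> one L \<in> carrier L \<and>
     (\<forall>a\<in>carrier L. \<forall>b\<in>carrier L. meet L a b \<in> carrier L \<and> join L a b \<in> carrier L) \<and>
     (\<forall>a\<in>carrier L. le L a a) \<and>
     (\<forall>a\<in>carrier L. \<forall>b\<in>carrier L. le L a b \<and> le L b a \<longrightarrow> a = b) \<and>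
     (\<forall>a\<in>carrier L. \<forall>b\<in>carrier L. \<forall>c\<in>carrier L. le L a b \<and> le L b c \<longrightarrow> le L a c) \<and>
     (\<forall>a\<in>carrier L. \<forall>b\<in>carrier L. \<forall>c\<in>carrier L.
        le L (meet L a b) a \<and> le L (meet L a b) b \<and>
        (le L c a \<and> le L c b \<longrightarrow> le L c (meet L a b))) \<and>
     (\<forall>a\<in>carrier L. \<forall>b\<in>carrier L. \<forall>c\<in>carrier L.
        le L a (join L a b) \<and> le L b (join L a b) \<and>
        (le L a c \<and> le L b c \<longrightarrow> le L (join L a b) c)) \<and>
     (\<forall>a\<in>carrier L. le L (zero L) a \<and> le L a (one L))"

definition ortholattice :: "('a, 'b) ol_scheme \<Rightarrow> bool" where
  "ortholattice L \<longleftrightarrow> bounded_lattice_on L \<and>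
     (\<forall>a\<in>carrier L. compl L a \<in> carrier L) \<and>
     (\<forall>a\<in>carrier L. compl L (compl L a) = a) \<and>
     (\<forall>a\<in>carrier L. \<forall>b\<in>carrier L. le L a b \<longrightarrow> le L (compl L b) (compl L a)) \<and>
     (\<forall>a\<in>carrier L. meet L a (compl L a) = zero L \<and> join L a (compl L a) = one L)"

definition orthomodular :: "('a, 'b) ol_scheme \<Rightarrow> bool" where
  "orthomodular L \<longleftrightarrow> ortholattice L \<and>
     (\<forall>a\<in>carrier L. \<forall>b\<in>carrier L. le L a b \<longrightarrow> b = join L a (meet L (compl L a) b))"

definition imp :: "('a, 'b) ol_scheme \<Rightarrow> 'a \<Rightarrow> 'a \<Rightarrow> 'a" where
  "imp L a b = join L (compl L a) (meet L a b)"

definition orth :: "('a, 'b) ol_scheme \<Rightarrow> 'a \<Rightarrow> 'a \<Rightarrow> bool" where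
  "orth L a b \<longleftrightarrow> le L a (compl L b)"

text \<open>Finite meet of a list, right-nested: x1 \<inter> (x2 \<inter> (... \<inter> xk)), with the last
  element not meeted with 1 (lists here are always nonempty).\<close>
fun meets :: "('a, 'b) ol_scheme \<Rightarrow> 'a list \<Rightarrow> 'a" where
  "meets L [] = one L"
| "meets L [x] = x"
| "meets L (x # y # ys) = meet L x (meets L (y # ys))"

text \<open>For a list xs = [a_1, ..., a_n] (0-indexed: a_(i+1) = xs!i):
  godowski_fwd = (a1\<rightarrow>a2) \<inter> (a2\<rightarrow>a3) \<inter> ... \<inter> (a(n-1)\<rightarrow>an) \<inter> (an\<rightarrow>a1),
  godowski_bwd = (an\<rightarrow>a(n-1)) \<inter> ... \<inter> (a2\<rightarrow>a1) \<inter> (a1\<rightarrow>an).\<close>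
definition godowski_fwd :: "('a, 'b) ol_scheme \<Rightarrow> 'a list \<Rightarrow> 'a" where
  "godowski_fwd L xs =
     meets L (map (\<lambda>i. imp L (xs ! i) (xs ! (i + 1))) [0..<length xs - 1]
              @ [imp L (xs ! (length xs - 1)) (xs ! 0)])"

definition godowski_bwd :: "('a, 'b) ol_scheme \<Rightarrow> 'a list \<Rightarrow> 'a" where
  "godowski_bwd L xs =
     meets L (map (\<lambda>i. imp L (xs ! (i + 1)) (xs ! i)) (rev [0..<length xs - 1])
              @ [imp L (xs ! 0) (xs ! (length xs - 1))])"

definition n_Go :: "nat \<Rightarrow> ('a, 'b) ol_scheme \<Rightarrow> bool" where
  "n_Go n L \<longleftrightarrow>
     (\<forall>xs. length xs = n \<and> set xs \<subseteq> carrier L \<longrightarrow> godowski_fwd L xs = godowski_bwd L xs)"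

definition is_state :: "('a, 'b) ol_scheme \<Rightarrow> ('a \<Rightarrow> real) \<Rightarrow> bool" where
  "is_state L m \<longleftrightarrow>
     (\<forall>a\<in>carrier L. 0 \<le> m a \<and> m a \<le> 1) \<and>
     m (one L) = 1 \<and>
     (\<forall>a\<in>carrier L. \<forall>b\<in>carrier L. orth L a b \<longrightarrow> m (join L a b) = m a + m b)"

definition has_strong_states :: "('a, 'b) ol_scheme \<Rightarrow> bool" where
  "has_strong_states L \<longleftrightarrow>
     (\<exists>S. S \<noteq> {} \<and> (\<forall>m\<in>S. is_state L m) \<and>
        (\<forall>a\<in>carrier L. \<forall>b\<in>carrier L. \<not> le L a b \<longrightarrow> (\<exists>m\<in>S. m a = 1 \<and> m b \<noteq> 1)))"

end

theory Submission
  imports Defs "HOL-Library.Nat_Bijection"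
begin

(* Write the cyclic Godowski terms of a_1, ..., a_n as meets of the "cycle terms"
   a_i \<rightarrow> a_(i+1) (forward) resp. a_(i+1) \<rightarrow> a_i (backward), indices mod n.
   (i)  A state m with m(a_i \<rightarrow> a_(i+1)) = 1 for all i satisfies m(a_i) \<le> m(a_(i+1)) around a
        cycle, so m is constant on the a_i; then m(a \<rightarrow> b) = 1 - m a + m(a \<sqinter> b) shows that m is 1
        on all backward terms as well (and conversely).  With a strong set of states this turns
        into the inequalities between the two meets.
   (ii) Choosing a_1, ..., a_n = a, b, c, ..., c reduces n-Go to 3-Go, and 3-Go with c = 1 is
        the dual orthomodular law x \<le> y \<Longrightarrow> x = y \<sqinter> (y' \<squnion> x).
   (iii) The closed subsets of an orthogonality space form an ortholattice; for the atoms of a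
        Greechie diagram with three-atom blocks it is orthomodular.  A concrete diagram with
        16 atoms and 9 blocks violates 3-Go, hence every n-Go with n \<ge> 3.
   The file develops ortholattice basics, the cycle terms, (i), (ii), (iii), and finally the
   theorem. *)

locale olat =
  fixes L :: "('a, 'b) ol_scheme"
  assumes ol: "ortholattice L"
begin

lemma ortholattice_parts:
  "bounded_lattice_on L"
  "\<forall>a\<in>carrier L. compl L a \<in> carrier L"
  "\<forall>a\<in>carrier L. compl L (compl L a) = a"
  "\<forall>a\<in>carrier L. \<forall>b\<in>carrier L. le L a b \<longrightarrow> le L (compl L b) (compl L a)"
  "\<forall>a\<in>carrier L. meet L a (compl L a) = zero L \<and> join L a (compl L a) = one L"
  using ol unfolding ortholattice_def by auto

lemma bounded_lattice_parts:
  "zero L \<in> carrier L" "one L \<in> carrier L"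
  "\<forall>a\<in>carrier L. \<forall>b\<in>carrier L. meet L a b \<in> carrier L \<and> join L a b \<in> carrier L"
  "\<forall>a\<in>carrier L. le L a a"
  "\<forall>a\<in>carrier L. \<forall>b\<in>carrier L. le L a b \<and> le L b a \<longrightarrow> a = b"
  "\<forall>a\<in>carrier L. \<forall>b\<in>carrier L. \<forall>c\<in>carrier L. le L a b \<and> le L b c \<longrightarrow> le L a c"
  "\<forall>a\<in>carrier L. \<forall>b\<in>carrier L. \<forall>c\<in>carrier L.
     le L (meet L a b) a \<and> le L (meet L a b) b \<and> (le L c a \<and> le L c b \<longrightarrow> le L c (meet L a b))"
  "\<forall>a\<in>carrier L. \<forall>b\<in>carrier L. \<forall>c\<in>carrier L.
     le L a (join L a b) \<and> le L b (join L a b) \<and> (le L a c \<and> le L b c \<longrightarrow> le L (join L a b) c)"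
  "\<forall>a\<in>carrier L. le L (zero L) a \<and> le L a (one L)"
  by (insert ortholattice_parts(1), unfold bounded_lattice_on_def, elim conjE, assumption)+

lemma zero_closed: "zero L \<in> carrier L" using bounded_lattice_parts(1) .
lemma one_closed: "one L \<in> carrier L" using bounded_lattice_parts(2) .
lemma meet_closed: "a \<in> carrier L \<Longrightarrow> b \<in> carrier L \<Longrightarrow> meet L a b \<in> carrier L"
  using bounded_lattice_parts(3) by blast
lemma join_closed: "a \<in> carrier L \<Longrightarrow> b \<in> carrier L \<Longrightarrow> join L a b \<in> carrier L"
  using bounded_lattice_parts(3) by blast
lemma compl_closed: "a \<in> carrier L \<Longrightarrow> compl L a \<in> carrier L"
  using ortholattice_parts(2) by blast
lemma ol_refl: "a \<in> carrier L \<Longrightarrow> le L a a"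
  using bounded_lattice_parts(4) by blast
lemma ol_antisym: "a \<in> carrier L \<Longrightarrow> b \<in> carrier L \<Longrightarrow> le L a b \<Longrightarrow> le L b a \<Longrightarrow> a = b"
  using bounded_lattice_parts(5) by blast
lemma ol_trans:
  "a \<in> carrier L \<Longrightarrow> b \<in> carrier L \<Longrightarrow> c \<in> carrier L \<Longrightarrow> le L a b \<Longrightarrow> le L b c \<Longrightarrow> le L a c"
  using bounded_lattice_parts(6) by blast
lemma meet_le1: "a \<in> carrier L \<Longrightarrow> b \<in> carrier L \<Longrightarrow> le L (meet L a b) a"
  using bounded_lattice_parts(7) by blast
lemma meet_le2: "a \<in> carrier L \<Longrightarrow> b \<in> carrier L \<Longrightarrow> le L (meet L a b) b"
  using bounded_lattice_parts(7) by blast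
lemma meet_greatest:
  "a \<in> carrier L \<Longrightarrow> b \<in> carrier L \<Longrightarrow> c \<in> carrier L \<Longrightarrow> le L c a \<Longrightarrow> le L c b \<Longrightarrow> le L c (meet L a b)"
  using bounded_lattice_parts(7) by blast
lemma join_ge1: "a \<in> carrier L \<Longrightarrow> b \<in> carrier L \<Longrightarrow> le L a (join L a b)"
  using bounded_lattice_parts(8) one_closed by blast
lemma join_ge2: "a \<in> carrier L \<Longrightarrow> b \<in> carrier L \<Longrightarrow> le L b (join L a b)"
  using bounded_lattice_parts(8) one_closed by blast
lemma join_least:
  "a \<in> carrier L \<Longrightarrow> b \<in> carrier L \<Longrightarrow> c \<in> carrier L \<Longrightarrow> le L a c \<Longrightarrow> le L b c \<Longrightarrow> le L (join L a b) c"
  using bounded_lattice_parts(8) by blast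
lemma zero_le: "a \<in> carrier L \<Longrightarrow> le L (zero L) a"
  using bounded_lattice_parts(9) by blast
lemma le_one: "a \<in> carrier L \<Longrightarrow> le L a (one L)"
  using bounded_lattice_parts(9) by blast
lemma compl_compl: "a \<in> carrier L \<Longrightarrow> compl L (compl L a) = a"
  using ortholattice_parts(3) by blast
lemma compl_anti: "a \<in> carrier L \<Longrightarrow> b \<in> carrier L \<Longrightarrow> le L a b \<Longrightarrow> le L (compl L b) (compl L a)"
  using ortholattice_parts(4) by blast
lemma meet_compl: "a \<in> carrier L \<Longrightarrow> meet L a (compl L a) = zero L"
  using ortholattice_parts(5) by blast
lemma join_compl: "a \<in> carrier L \<Longrightarrow> join L a (compl L a) = one L"
  using ortholattice_parts(5) by blast

lemma le_meet_iff:
  "a \<in> carrier L \<Longrightarrow> b \<in> carrier L \<Longrightarrow> c \<in> carrier L \<Longrightarrow> le L c (meet L a b) \<longleftrightarrow> le L c a \<and> le L c b"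
  by (meson meet_closed meet_greatest meet_le1 meet_le2 ol_trans)

lemma meet_comm: "a \<in> carrier L \<Longrightarrow> b \<in> carrier L \<Longrightarrow> meet L a b = meet L b a"
  by (meson ol_antisym meet_closed meet_greatest meet_le1 meet_le2)

lemma meet_absorb: "a \<in> carrier L \<Longrightarrow> b \<in> carrier L \<Longrightarrow> le L a b \<Longrightarrow> meet L a b = a"
  by (meson ol_antisym meet_closed meet_greatest meet_le1 ol_refl)

lemma join_absorb: "a \<in> carrier L \<Longrightarrow> b \<in> carrier L \<Longrightarrow> le L a b \<Longrightarrow> join L a b = b"
  by (meson ol_antisym join_closed join_least join_ge2 ol_refl)

lemma join_comm: "a \<in> carrier L \<Longrightarrow> b \<in> carrier L \<Longrightarrow> join L a b = join L b a"
  by (meson ol_antisym join_closed join_least join_ge1 join_ge2)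

lemma eq_by_lower_bounds:
  "a \<in> carrier L \<Longrightarrow> b \<in> carrier L \<Longrightarrow> (\<And>c. c \<in> carrier L \<Longrightarrow> le L c a \<longleftrightarrow> le L c b) \<Longrightarrow> a = b"
  by (meson ol_antisym ol_refl)

lemma join_le_iff:
  "a \<in> carrier L \<Longrightarrow> b \<in> carrier L \<Longrightarrow> c \<in> carrier L \<Longrightarrow> le L (join L a b) c \<longleftrightarrow> le L a c \<and> le L b c"
  by (meson join_closed join_least join_ge1 join_ge2 ol_trans)

lemma le_compl_swap: "a \<in> carrier L \<Longrightarrow> b \<in> carrier L \<Longrightarrow> le L a (compl L b) \<longleftrightarrow> le L b (compl L a)"
  by (metis compl_anti compl_closed compl_compl)

text \<open>De Morgan's law, needed to pass between the two dual forms of orthomodularity.\<close>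
lemma compl_join:
  assumes a: "a \<in> carrier L" and b: "b \<in> carrier L"
  shows "compl L (join L a b) = meet L (compl L a) (compl L b)"
proof (rule eq_by_lower_bounds)
  fix c assume c: "c \<in> carrier L"
  have "le L c (compl L (join L a b)) \<longleftrightarrow> le L (join L a b) (compl L c)"
    using a b c by (simp add: le_compl_swap join_closed)
  also have "\<dots> \<longleftrightarrow> le L a (compl L c) \<and> le L b (compl L c)"
    using a b c by (simp add: join_le_iff compl_closed)
  also have "\<dots> \<longleftrightarrow> le L c (meet L (compl L a) (compl L b))"
    using a b c by (simp add: le_compl_swap le_meet_iff compl_closed)
  finally show "le L c (compl L (join L a b)) \<longleftrightarrow> le L c (meet L (compl L a) (compl L b))" .
qed (use a b in \<open>simp_all add: compl_closed join_closed meet_closed\<close>)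

lemma compl_meet:
  assumes a: "a \<in> carrier L" and b: "b \<in> carrier L"
  shows "compl L (meet L a b) = join L (compl L a) (compl L b)"
  using compl_join[OF compl_closed[OF a] compl_closed[OF b]] a b
  by (metis compl_closed compl_compl join_closed)

lemma join_zero: "a \<in> carrier L \<Longrightarrow> join L (zero L) a = a"
  by (simp add: join_absorb zero_closed zero_le)

lemma compl_one: "compl L (one L) = zero L"
proof -
  have "compl L (zero L) = one L"
    using join_compl[OF zero_closed] join_zero[OF compl_closed[OF zero_closed]] by simp
  then show ?thesis using compl_compl[OF zero_closed] by simp
qed

lemma imp_closed: "a \<in> carrier L \<Longrightarrow> b \<in> carrier L \<Longrightarrow> imp L a b \<in> carrier L"
  unfolding imp_def by (simp add: compl_closed join_closed meet_closed)

lemma imp_le_one: "a \<in> carrier L \<Longrightarrow> b \<in> carrier L \<Longrightarrow> le L a b \<Longrightarrow> imp L a b = one L"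
  unfolding imp_def by (metis compl_closed join_compl join_comm meet_absorb)

lemma imp_self: "a \<in> carrier L \<Longrightarrow> imp L a a = one L"
  using imp_le_one ol_refl by blast

lemma imp_one_left: "a \<in> carrier L \<Longrightarrow> imp L (one L) a = a"
proof -
  assume a: "a \<in> carrier L"
  have "meet L (one L) a = a" using meet_absorb[OF a one_closed le_one[OF a]] meet_comm[OF a one_closed] by simp
  then show ?thesis unfolding imp_def using compl_one join_zero[OF a] by simp
qed

lemma imp_one_right: "a \<in> carrier L \<Longrightarrow> imp L a (one L) = one L"
  using imp_le_one le_one one_closed by blast

lemma meets_glb:
  assumes "xs \<noteq> []" and "set xs \<subseteq> carrier L"
  shows "meets L xs \<in> carrier L \<and> (\<forall>c\<in>carrier L. le L c (meets L xs) \<longleftrightarrow> (\<forall>x\<in>set xs. le L c x))"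
  using assms by (induction xs rule: induct_list012) (auto simp: le_meet_iff meet_closed)

end

text \<open>The forward Godowski
  term is the meet of the cycle terms of the implication, the backward one that of the converse
  implication.\<close>
definition cyc_terms :: "('x \<Rightarrow> 'x \<Rightarrow> 'y) \<Rightarrow> 'x list \<Rightarrow> 'y set" where
  "cyc_terms f xs = (\<lambda>i. f (xs ! i) (xs ! (Suc i mod length xs))) ` {..<length xs}"

lemma set_cyclic_list:
  assumes "xs \<noteq> []"
  shows "set (map (\<lambda>i. f (xs ! i) (xs ! (i + 1))) [0..<length xs - 1] @ [f (xs ! (length xs - 1)) (xs ! 0)])
         = cyc_terms f xs"
proof -
  let ?n = "length xs"
  have n: "0 < ?n" using assms by simp
  have "cyc_terms f xs = (\<lambda>i. f (xs ! i) (xs ! (Suc i mod ?n))) ` insert (?n - 1) {..<?n - 1}"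
    unfolding cyc_terms_def using n by (metis Suc_diff_1 lessThan_Suc)
  also have "\<dots> = insert (f (xs ! (?n - 1)) (xs ! 0)) ((\<lambda>i. f (xs ! i) (xs ! (i + 1))) ` {..<?n - 1})"
    using n by (auto intro!: image_cong)
  finally show ?thesis by (auto simp: atLeast0LessThan)
qed

lemma cyclic_successor_less: "j < n \<Longrightarrow> Suc j mod n < (n::nat)"
  by (metis mod_less_divisor zero_less_iff_neq_zero not_less0)

lemma cyclic_entry_mem:
  assumes "set xs \<subseteq> A" and "j < length xs"
  shows "xs ! j \<in> A" and "xs ! (Suc j mod length xs) \<in> A"
  using assms nth_mem cyclic_successor_less by blast+

lemma cyc_terms_closed:
  assumes "\<And>x y. x \<in> A \<Longrightarrow> y \<in> A \<Longrightarrow> f x y \<in> B" and "set xs \<subseteq> A"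
  shows "cyc_terms f xs \<subseteq> B"
  using assms cyclic_entry_mem[OF assms(2)] unfolding cyc_terms_def by auto

context olat
begin

lemma meets_glb_of_set:
  assumes "xs \<noteq> []" and "set xs = T" and "T \<subseteq> carrier L"
  shows "meets L xs \<in> carrier L \<and> (\<forall>c\<in>carrier L. le L c (meets L xs) \<longleftrightarrow> (\<forall>t\<in>T. le L c t))"
  using meets_glb[OF assms(1)] assms(2,3) by simp

lemma godowski_fwd_glb:
  assumes "xs \<noteq> []" and "set xs \<subseteq> carrier L"
  shows "godowski_fwd L xs \<in> carrier L \<and>
    (\<forall>c\<in>carrier L. le L c (godowski_fwd L xs) \<longleftrightarrow> (\<forall>t\<in>cyc_terms (imp L) xs. le L c t))"
proof -
  have "cyc_terms (imp L) xs \<subseteq> carrier L"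
    using assms(2) by (intro cyc_terms_closed) (auto simp: imp_closed)
  moreover have "set (map (\<lambda>i. imp L (xs ! i) (xs ! (i + 1))) [0..<length xs - 1]
      @ [imp L (xs ! (length xs - 1)) (xs ! 0)]) = cyc_terms (imp L) xs"
    using set_cyclic_list[OF assms(1)] .
  ultimately show ?thesis
    unfolding godowski_fwd_def by (intro meets_glb_of_set) simp_all
qed

lemma godowski_bwd_glb:
  assumes "xs \<noteq> []" and "set xs \<subseteq> carrier L"
  shows "godowski_bwd L xs \<in> carrier L \<and>
    (\<forall>c\<in>carrier L. le L c (godowski_bwd L xs) \<longleftrightarrow> (\<forall>t\<in>cyc_terms (\<lambda>x y. imp L y x) xs. le L c t))"
proof -
  have "cyc_terms (\<lambda>x y. imp L y x) xs \<subseteq> carrier L"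
    using assms(2) by (intro cyc_terms_closed) (auto simp: imp_closed)
  moreover have "set (map (\<lambda>i. imp L (xs ! (i + 1)) (xs ! i)) (rev [0..<length xs - 1])
      @ [imp L (xs ! 0) (xs ! (length xs - 1))]) = cyc_terms (\<lambda>x y. imp L y x) xs"
    using set_cyclic_list[OF assms(1), of "\<lambda>x y. imp L y x"] by simp
  ultimately show ?thesis
    unfolding godowski_bwd_def by (intro meets_glb_of_set) simp_all
qed

end

lemma cyclic_chain_const:
  fixes r :: "nat \<Rightarrow> 'a::order"
  assumes step: "\<And>j. j < n \<Longrightarrow> r j \<le> r (Suc j mod n)" and i: "i < n"
  shows "r i = r 0"
proof -
  have up: "r 0 \<le> r k" if "k < n" for k
    using that
  proof (induction k)
    case (Suc k)
    then show ?case using step[of k] order_trans by fastforce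
  qed simp
  have down: "r k \<le> r (n - 1)" if "k \<le> n - 1" for k
    using that
  proof (induction k rule: inc_induct)
    case (step k)
    then show ?case using assms(1)[of k] order_trans by fastforce
  qed simp
  have "r i \<le> r (n - 1)" using down[of i] i by simp
  moreover have "r (n - 1) \<le> r 0" using step[of "n - 1"] i by simp
  ultimately show ?thesis using up[OF i] by simp
qed

context olat
begin

lemma state_range: "is_state L m \<Longrightarrow> a \<in> carrier L \<Longrightarrow> 0 \<le> m a \<and> m a \<le> 1"
  unfolding is_state_def by blast

lemma state_orth_add:
  "is_state L m \<Longrightarrow> a \<in> carrier L \<Longrightarrow> b \<in> carrier L \<Longrightarrow> le L a (compl L b) \<Longrightarrow> m (join L a b) = m a + m b"
  unfolding is_state_def orth_def by blast

lemma state_compl: "is_state L m \<Longrightarrow> a \<in> carrier L \<Longrightarrow> m (compl L a) = 1 - m a"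
  using state_orth_add[of m a "compl L a"] join_compl[of a]
  by (simp add: compl_closed compl_compl ol_refl is_state_def)

lemma state_mono: "is_state L m \<Longrightarrow> a \<in> carrier L \<Longrightarrow> b \<in> carrier L \<Longrightarrow> le L a b \<Longrightarrow> m a \<le> m b"
  using state_orth_add[of m a "compl L b"] state_range[of m "join L a (compl L b)"] state_compl[of m b]
  by (simp add: compl_closed compl_compl join_closed)

lemma state_imp: "is_state L m \<Longrightarrow> a \<in> carrier L \<Longrightarrow> b \<in> carrier L \<Longrightarrow> m (imp L a b) = 1 - m a + m (meet L a b)"
  unfolding imp_def
  using state_orth_add[of m "compl L a" "meet L a b"] state_compl[of m a]
  by (simp add: compl_closed meet_closed compl_anti meet_le1)

lemma state_imp_one_le:
  "is_state L m \<Longrightarrow> a \<in> carrier L \<Longrightarrow> b \<in> carrier L \<Longrightarrow> m (imp L a b) = 1 \<Longrightarrow> m a \<le> m b"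
  using state_imp[of m a b] state_mono[of m "meet L a b" b] by (simp add: meet_closed meet_le2)

lemma state_imp_one_converse:
  "is_state L m \<Longrightarrow> a \<in> carrier L \<Longrightarrow> b \<in> carrier L \<Longrightarrow> m a = m b \<Longrightarrow> m (imp L a b) = 1 \<Longrightarrow> m (imp L b a) = 1"
  using state_imp[of m a b] state_imp[of m b a] meet_comm[of a b] by simp

lemma state_const_on_cycle:
  assumes m: "is_state L m" and xs: "set xs \<subseteq> carrier L" and i: "i < length xs"
    and one: "(\<forall>t\<in>cyc_terms (imp L) xs. m t = 1) \<or> (\<forall>t\<in>cyc_terms (\<lambda>x y. imp L y x) xs. m t = 1)"
  shows "m (xs ! i) = m (xs ! 0)"
proof -
  let ?n = "length xs"
  note entries = cyclic_entry_mem[OF xs]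
  from one show ?thesis
  proof
    assume fwd: "\<forall>t\<in>cyc_terms (imp L) xs. m t = 1"
    have "m (xs ! j) \<le> m (xs ! (Suc j mod ?n))" if j: "j < ?n" for j
    proof (rule state_imp_one_le[OF m entries[OF j]])
      show "m (imp L (xs ! j) (xs ! (Suc j mod ?n))) = 1" using fwd j unfolding cyc_terms_def by blast
    qed
    then show ?thesis using cyclic_chain_const[of ?n "\<lambda>j. m (xs ! j)"] i by blast
  next
    assume bwd: "\<forall>t\<in>cyc_terms (\<lambda>x y. imp L y x) xs. m t = 1"
    have "m (xs ! (Suc j mod ?n)) \<le> m (xs ! j)" if j: "j < ?n" for j
    proof (rule state_imp_one_le[OF m entries(2,1)[OF j]])
      show "m (imp L (xs ! (Suc j mod ?n)) (xs ! j)) = 1" using bwd j unfolding cyc_terms_def by blast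
    qed
    then have "- m (xs ! i) = - m (xs ! 0)"
      using cyclic_chain_const[of ?n "\<lambda>j. - m (xs ! j)"] i by simp
    then show ?thesis by simp
  qed
qed

lemma state_cycle_symmetric:
  assumes m: "is_state L m" and xs: "set xs \<subseteq> carrier L"
  shows "(\<forall>t\<in>cyc_terms (imp L) xs. m t = 1) \<longleftrightarrow> (\<forall>t\<in>cyc_terms (\<lambda>x y. imp L y x) xs. m t = 1)"
proof -
  let ?n = "length xs"
  note entries = cyclic_entry_mem[OF xs]
  have const: "m (xs ! j) = m (xs ! (Suc j mod ?n))"
    if "j < ?n" and "(\<forall>t\<in>cyc_terms (imp L) xs. m t = 1) \<or> (\<forall>t\<in>cyc_terms (\<lambda>x y. imp L y x) xs. m t = 1)"
    for j
    using state_const_on_cycle[OF m xs _ that(2), of j] state_const_on_cycle[OF m xs _ that(2), of "Suc j mod ?n"]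
      that(1) cyclic_successor_less by auto
  have swap: "m (imp L (xs ! j) (xs ! (Suc j mod ?n))) = 1 \<longleftrightarrow> m (imp L (xs ! (Suc j mod ?n)) (xs ! j)) = 1"
    if "j < ?n" and "(\<forall>t\<in>cyc_terms (imp L) xs. m t = 1) \<or> (\<forall>t\<in>cyc_terms (\<lambda>x y. imp L y x) xs. m t = 1)"
    for j
    using state_imp_one_converse[OF m entries[OF that(1)] const[OF that]]
      state_imp_one_converse[OF m entries(2,1)[OF that(1)] const[OF that, symmetric]] by blast
  show ?thesis
    using swap unfolding cyc_terms_def by auto
qed

lemma strong_states_transfer:
  assumes S: "has_strong_states L" and a: "a \<in> carrier L" and T': "T' \<subseteq> carrier L"
    and below: "\<forall>t\<in>T. le L a t" and T: "T \<subseteq> carrier L"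
    and transfer: "\<And>m. is_state L m \<Longrightarrow> \<forall>t\<in>T. m t = 1 \<Longrightarrow> \<forall>t\<in>T'. m t = 1"
  shows "\<forall>t\<in>T'. le L a t"
proof (rule ccontr)
  assume "\<not> (\<forall>t\<in>T'. le L a t)"
  then obtain t where t: "t \<in> T'" "\<not> le L a t" by blast
  then obtain m where m: "is_state L m" and ma: "m a = 1" and mt: "m t \<noteq> 1"
    using S a T' unfolding has_strong_states_def by blast
  have "m s = 1" if "s \<in> T" for s
    using state_mono[OF m a _ below[rule_format, OF that]] state_range[OF m] that T ma
    by (metis order_antisym subsetD)
  then show False using transfer[OF m] t mt by blast
qed

theorem strong_states_godowski:
  assumes S: "has_strong_states L" and ne: "xs \<noteq> []" and xs: "set xs \<subseteq> carrier L"
  shows "godowski_fwd L xs = godowski_bwd L xs"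
proof -
  let ?F = "cyc_terms (imp L) xs" and ?B = "cyc_terms (\<lambda>x y. imp L y x) xs"
  note fwd = godowski_fwd_glb[OF ne xs] and bwd = godowski_bwd_glb[OF ne xs]
  have F: "?F \<subseteq> carrier L" and B: "?B \<subseteq> carrier L"
    using xs by (intro cyc_terms_closed; simp add: imp_closed)+
  have "\<forall>t\<in>?F. le L (godowski_fwd L xs) t" using fwd ol_refl by blast
  then have "\<forall>t\<in>?B. le L (godowski_fwd L xs) t"
    using strong_states_transfer[OF S _ B _ F] state_cycle_symmetric[OF _ xs] fwd by blast
  then have le1: "le L (godowski_fwd L xs) (godowski_bwd L xs)" using fwd bwd by blast
  have "\<forall>t\<in>?B. le L (godowski_bwd L xs) t" using bwd ol_refl by blast
  then have "\<forall>t\<in>?F. le L (godowski_bwd L xs) t"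
    using strong_states_transfer[OF S _ F _ B] state_cycle_symmetric[OF _ xs] bwd by blast
  then have le2: "le L (godowski_bwd L xs) (godowski_fwd L xs)" using fwd bwd by blast
  show ?thesis using ol_antisym le1 le2 fwd bwd by blast
qed

corollary strong_states_n_Go: "has_strong_states L \<Longrightarrow> 0 < n \<Longrightarrow> n_Go n L"
  unfolding n_Go_def using strong_states_godowski by fastforce

end

lemma cyc_terms_padded:
  assumes n: "3 \<le> n"
  shows "{f a b, f b c, f c a} \<subseteq> cyc_terms f ([a, b] @ replicate (n - 2) c)"
    and "cyc_terms f ([a, b] @ replicate (n - 2) c) \<subseteq> {f a b, f b c, f c a, f c c}"
proof -
  let ?xs = "[a, b] @ replicate (n - 2) c"
  have len: "length ?xs = n" using n by simp
  have nth: "?xs ! i = (if i = 0 then a else if i = 1 then b else c)" if "i < n" for i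
    using that by (simp add: nth_append)
  have cycle_term: "f (?xs ! i) (?xs ! (Suc i mod n)) =
      (if i = 0 then f a b else if i = 1 then f b c else if i = n - 1 then f c a else f c c)"
    if "i < n" for i
  proof -
    have "Suc i mod n = (if i = n - 1 then 0 else Suc i)" using that by auto
    then show ?thesis using that n by (auto simp: nth cyclic_successor_less)
  qed
  have image: "cyc_terms f ?xs = (\<lambda>i. if i = 0 then f a b else if i = 1 then f b c
      else if i = n - 1 then f c a else f c c) ` {..<n}"
    unfolding cyc_terms_def len using cycle_term by (auto intro!: image_cong)
  show "{f a b, f b c, f c a} \<subseteq> cyc_terms f ?xs"
    unfolding image using n by (auto intro!: image_eqI[where x = 0] image_eqI[where x = 1]
        image_eqI[where x = "n - 1"])
  show "cyc_terms f ?xs \<subseteq> {f a b, f b c, f c a, f c c}"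
    unfolding image by auto
qed

context olat
begin

lemma glb_three:
  assumes T: "{p, q, r} \<subseteq> T" "T \<subseteq> {p, q, r, one L}"
    and pqr: "p \<in> carrier L" "q \<in> carrier L" "r \<in> carrier L"
    and g: "g \<in> carrier L" "\<forall>c\<in>carrier L. le L c g \<longleftrightarrow> (\<forall>t\<in>T. le L c t)"
  shows "g = meet L p (meet L q r)"
proof (rule eq_by_lower_bounds)
  fix c assume c: "c \<in> carrier L"
  have "(\<forall>t\<in>T. le L c t) \<longleftrightarrow> le L c p \<and> le L c q \<and> le L c r"
    using T le_one[OF c] by blast
  then show "le L c g \<longleftrightarrow> le L c (meet L p (meet L q r))"
    using g c pqr by (simp add: le_meet_iff meet_closed)
qed (use g pqr in \<open>simp_all add: meet_closed\<close>)

text \<open>n-Go implies 3-Go: instantiate a_1, ..., a_n by a, b, c, ..., c.\<close>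
lemma n_Go_three:
  assumes go: "n_Go n L" and n: "3 \<le> n" and abc: "a \<in> carrier L" "b \<in> carrier L" "c \<in> carrier L"
  shows "meet L (imp L a b) (meet L (imp L b c) (imp L c a)) =
         meet L (imp L c b) (meet L (imp L b a) (imp L a c))"
proof -
  let ?xs = "[a, b] @ replicate (n - 2) c"
  have xs: "?xs \<noteq> []" "set ?xs \<subseteq> carrier L" "length ?xs = n" using n abc by auto
  have "godowski_fwd L ?xs = meet L (imp L a b) (meet L (imp L b c) (imp L c a))"
    using cyc_terms_padded[OF n, of "imp L" a b c] godowski_fwd_glb[OF xs(1,2)] abc
    by (intro glb_three) (auto simp: imp_closed imp_self)
  moreover have "godowski_bwd L ?xs = meet L (imp L c b) (meet L (imp L b a) (imp L a c))"
    using cyc_terms_padded[OF n, of "\<lambda>x y. imp L y x" a b c] godowski_bwd_glb[OF xs(1,2)] abc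
    by (intro glb_three) (auto simp: imp_closed imp_self)
  moreover have "godowski_fwd L ?xs = godowski_bwd L ?xs"
    using go xs unfolding n_Go_def by blast
  ultimately show ?thesis by simp
qed

text \<open>3-Go with c = 1 says x = y \<inter> (y' \<union> x) whenever x \<le> y, the dual form of orthomodularity.\<close>
lemma n_Go_dual_orthomodular:
  assumes go: "n_Go n L" and n: "3 \<le> n"
    and x: "x \<in> carrier L" and y: "y \<in> carrier L" and xy: "le L x y"
  shows "x = meet L y (join L (compl L y) x)"
proof -
  have yx: "imp L y x = join L (compl L y) x"
    unfolding imp_def using meet_absorb[OF x y xy] meet_comm[OF x y] by simp
  have "meet L (imp L x y) (meet L (imp L y (one L)) (imp L (one L) x)) = x"
    using x y imp_le_one[OF x y xy] imp_one_right imp_one_left meet_absorb[OF x one_closed le_one]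
      meet_comm[OF x one_closed] by (simp add: one_closed)
  moreover have "meet L (imp L (one L) y) (meet L (imp L y x) (imp L x (one L))) =
      meet L y (join L (compl L y) x)"
    using x y yx imp_one_right imp_one_left meet_absorb[OF _ one_closed le_one]
    by (simp add: compl_closed join_closed)
  ultimately show ?thesis using n_Go_three[OF go n x y one_closed] by simp
qed

text \<open>Part (ii): dualising the previous law by complementation gives orthomodularity.\<close>
theorem n_Go_orthomodular:
  assumes go: "n_Go n L" and n: "3 \<le> n"
  shows "orthomodular L"
  unfolding orthomodular_def
proof (intro conjI ol ballI impI)
  fix a b assume a: "a \<in> carrier L" and b: "b \<in> carrier L" and ab: "le L a b"
  have ca: "compl L a \<in> carrier L" and cb: "compl L b \<in> carrier L" using a b compl_closed by auto
  have "compl L b = meet L (compl L a) (join L a (compl L b))"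
    using n_Go_dual_orthomodular[OF go n cb ca compl_anti[OF a b ab]] compl_compl[OF a] by simp
  also have "\<dots> = compl L (join L a (meet L (compl L a) b))"
    using compl_join[OF a meet_closed[OF ca b]] compl_meet[OF ca b] compl_compl[OF a] by simp
  finally show "b = join L a (meet L (compl L a) b)"
    by (metis a b ca compl_compl join_closed meet_closed)
qed

end

locale orthogonality_space =
  fixes U :: "nat set" and R :: "nat \<Rightarrow> nat \<Rightarrow> bool"
  assumes finite_U: "finite U"
    and R_in_U: "R x y \<Longrightarrow> x \<in> U"
    and R_sym: "R x y \<Longrightarrow> R y x"
    and R_irrefl: "\<not> R x x"
begin

definition polar :: "nat set \<Rightarrow> nat set" where
  "polar A = {x \<in> U. \<forall>y\<in>A. R x y}"

definition closed :: "nat set \<Rightarrow> bool" where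
  "closed A \<longleftrightarrow> A \<subseteq> U \<and> polar (polar A) = A"

lemma polar_subset: "polar A \<subseteq> U"
  unfolding polar_def by auto

lemma polar_anti: "A \<subseteq> B \<Longrightarrow> polar B \<subseteq> polar A"
  unfolding polar_def by auto

lemma polar_extensive: "A \<subseteq> U \<Longrightarrow> A \<subseteq> polar (polar A)"
  unfolding polar_def using R_sym by auto

lemma polar_polar_polar: "A \<subseteq> U \<Longrightarrow> polar (polar (polar A)) = polar A"
  by (simp add: polar_anti polar_extensive polar_subset subset_antisym)

lemma polar_union: "polar (A \<union> B) = polar A \<inter> polar B"
  unfolding polar_def by auto

lemma polar_empty: "polar {} = U"
  unfolding polar_def by auto

lemma polar_U: "polar U = {}"
  unfolding polar_def using R_irrefl by auto

lemma disjoint_polar: "A \<inter> polar A = {}"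
  unfolding polar_def using R_irrefl by auto

lemma closed_polar: "A \<subseteq> U \<Longrightarrow> closed (polar A)"
  unfolding closed_def using polar_polar_polar polar_subset by blast

lemma closed_inter:
  assumes "closed A" and "closed B"
  shows "closed (A \<inter> B)"
proof -
  have "polar (polar (A \<inter> B)) \<subseteq> polar (polar A)" "polar (polar (A \<inter> B)) \<subseteq> polar (polar B)"
    by (simp_all add: polar_anti)
  moreover have "A \<inter> B \<subseteq> polar (polar (A \<inter> B))"
    using assms unfolding closed_def by (intro polar_extensive) auto
  ultimately show ?thesis using assms unfolding closed_def by auto
qed

lemma closed_empty: "closed {}" and closed_U: "closed U"
  unfolding closed_def by (simp_all add: polar_empty polar_U)

lemma finite_polar: "finite (polar A)"
  using finite_U polar_subset by (rule finite_subset[rotated])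

definition closed_lattice :: "nat ol" where
  "closed_lattice =
    \<lparr>carrier = set_encode ` Collect closed,
     le = (\<lambda>p q. set_decode p \<subseteq> set_decode q),
     meet = (\<lambda>p q. set_encode (set_decode p \<inter> set_decode q)),
     join = (\<lambda>p q. set_encode (polar (polar (set_decode p \<union> set_decode q)))),
     compl = (\<lambda>p. set_encode (polar (set_decode p))),
     zero = set_encode {}, one = set_encode U\<rparr>"

lemma carrier_closed_lattice: "p \<in> carrier closed_lattice \<longleftrightarrow> closed (set_decode p)"
proof -
  have "finite A" if "closed A" for A
    using that finite_U unfolding closed_def by (meson finite_subset)
  then show ?thesis unfolding closed_lattice_def
    by (auto simp: image_iff)
qed

lemma decode_closed_lattice:
  "le closed_lattice p q \<longleftrightarrow> set_decode p \<subseteq> set_decode q"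
  "set_decode (meet closed_lattice p q) = set_decode p \<inter> set_decode q"
  "set_decode (join closed_lattice p q) = polar (polar (set_decode p \<union> set_decode q))"
  "set_decode (compl closed_lattice p) = polar (set_decode p)"
  "set_decode (zero closed_lattice) = {}"
  "set_decode (one closed_lattice) = U"
  unfolding closed_lattice_def by (simp_all add: finite_polar finite_U)

lemmas closed_lattice_simps = carrier_closed_lattice decode_closed_lattice

lemma closed_lattice_eqI: "set_decode p = set_decode q \<Longrightarrow> p = q"
  by (metis set_decode_inverse)

theorem closed_lattice_ortholattice: "ortholattice closed_lattice"
  unfolding ortholattice_def bounded_lattice_on_def
proof (intro conjI ballI impI)
  show "zero closed_lattice \<in> carrier closed_lattice" "one closed_lattice \<in> carrier closed_lattice"
    by (simp_all add: closed_lattice_simps closed_empty closed_U)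
next
  fix a b assume "a \<in> carrier closed_lattice" "b \<in> carrier closed_lattice"
  then have A: "closed (set_decode a)" and B: "closed (set_decode b)"
    by (simp_all add: closed_lattice_simps)
  show "meet closed_lattice a b \<in> carrier closed_lattice"
    using closed_inter[OF A B] by (simp add: closed_lattice_simps)
  show "join closed_lattice a b \<in> carrier closed_lattice"
    using closed_polar[OF polar_subset] by (simp add: closed_lattice_simps)
  show "le closed_lattice (meet closed_lattice a b) a" "le closed_lattice (meet closed_lattice a b) b"
    by (auto simp: closed_lattice_simps)
  show "le closed_lattice a (join closed_lattice a b)" "le closed_lattice b (join closed_lattice a b)"
    using polar_extensive[of "set_decode a \<union> set_decode b"] A B unfolding closed_def
    by (auto simp: closed_lattice_simps)
  show "le closed_lattice a b \<and> le closed_lattice b a \<Longrightarrow> a = b"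
    by (rule closed_lattice_eqI) (auto simp: closed_lattice_simps)
  show "le closed_lattice a b \<Longrightarrow> le closed_lattice (compl closed_lattice b) (compl closed_lattice a)"
    by (simp add: closed_lattice_simps polar_anti)
next
  fix a b c
  assume "a \<in> carrier closed_lattice" "b \<in> carrier closed_lattice" "c \<in> carrier closed_lattice"
  then have C: "closed (set_decode c)" by (simp add: closed_lattice_simps)
  show "le closed_lattice a b \<and> le closed_lattice b c \<Longrightarrow> le closed_lattice a c"
    "le closed_lattice c a \<and> le closed_lattice c b \<Longrightarrow> le closed_lattice c (meet closed_lattice a b)"
    by (auto simp: closed_lattice_simps)
  show "le closed_lattice a c \<and> le closed_lattice b c \<Longrightarrow> le closed_lattice (join closed_lattice a b) c"
    using polar_anti[OF polar_anti, of "set_decode a \<union> set_decode b" "set_decode c"] C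
    unfolding closed_def by (simp add: closed_lattice_simps)
next
  fix a assume "a \<in> carrier closed_lattice"
  then have A: "closed (set_decode a)" by (simp add: closed_lattice_simps)
  show "le closed_lattice a a" "le closed_lattice (zero closed_lattice) a"
    by (simp_all add: closed_lattice_simps)
  show "le closed_lattice a (one closed_lattice)"
    using A unfolding closed_def by (simp add: closed_lattice_simps)
  show "compl closed_lattice a \<in> carrier closed_lattice"
    using A closed_polar[of "set_decode a"] by (simp add: closed_lattice_simps closed_def[of "set_decode a"])
  show "compl closed_lattice (compl closed_lattice a) = a"
    using A unfolding closed_def by (intro closed_lattice_eqI) (simp add: closed_lattice_simps)
  show "meet closed_lattice a (compl closed_lattice a) = zero closed_lattice"
    by (rule closed_lattice_eqI) (simp add: closed_lattice_simps disjoint_polar)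
  show "join closed_lattice a (compl closed_lattice a) = one closed_lattice"
    by (rule closed_lattice_eqI)
      (simp add: closed_lattice_simps polar_union Int_commute[of "polar (set_decode a)"] disjoint_polar polar_empty)
qed

end

text \<open>Atoms of a height-3 orthomodular lattice whose blocks have three atoms: two distinct
  atoms have at most one common orthogonal atom, every atom has two distinct orthogonal
  atoms, and every orthogonal pair extends to an orthogonal triple.\<close>
locale greechie_space = orthogonality_space +
  assumes unique_common_orth: "x \<noteq> y \<Longrightarrow> R z x \<Longrightarrow> R z y \<Longrightarrow> R w x \<Longrightarrow> R w y \<Longrightarrow> z = w"
    and two_orth: "x \<in> U \<Longrightarrow> \<exists>y z. y \<noteq> z \<and> R y x \<and> R z x"
    and orth_triple: "R x y \<Longrightarrow> \<exists>z. R z x \<and> R z y"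
begin

text \<open>Atoms are closed: an atom orthogonal to every atom orthogonal to x is x itself.\<close>
lemma polar_polar_atom:
  assumes x: "x \<in> U"
  shows "polar (polar {x}) = {x}"
proof
  show "{x} \<subseteq> polar (polar {x})" using polar_extensive[of "{x}"] x by simp
  show "polar (polar {x}) \<subseteq> {x}"
  proof
    fix z assume z: "z \<in> polar (polar {x})"
    obtain y y' where y: "y \<noteq> y'" "R y x" "R y' x" using two_orth[OF x] by blast
    then have "y \<in> polar {x}" "y' \<in> polar {x}" unfolding polar_def using R_in_U by auto
    then have "R z y" "R z y'" using z unfolding polar_def by auto
    then show "z \<in> {x}" using unique_common_orth[OF y(1)] y(2,3) R_sym by blast
  qed
qed

lemma closed_cases:
  assumes "closed A"
  shows "A = {} \<or> A = U \<or> (\<exists>x\<in>U. A = {x}) \<or> (\<exists>x\<in>U. A = polar {x})"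
proof -
  have A: "A \<subseteq> U" "polar (polar A) = A" using assms unfolding closed_def by auto
  consider "A = {}" | "polar A = {}" | z where "polar A = {z}"
    | z w where "z \<in> polar A" "w \<in> polar A" "z \<noteq> w"
    by blast
  then show ?thesis
  proof cases
    case 2
    then show ?thesis using A polar_empty by simp
  next
    case (3 z)
    then have "A = polar {z}" "z \<in> U" using A polar_subset by auto
    then show ?thesis by blast
  next
    case (4 z w)
    have single: "a = a'" if "a \<in> A" "a' \<in> A" for a a'
      using that 4 unique_common_orth[of z w a a'] R_sym unfolding polar_def by auto
    show ?thesis
    proof (cases "A = {}")
      case False
      then obtain a where "a \<in> A" by blast
      then have "A = {a}" "a \<in> U" using single A(1) by auto
      then show ?thesis by blast
    qed simp
  qed simp
qed

text \<open>The orthomodular law a \<le> b \<Longrightarrow> b = a \<squnion> (a' \<sqinter> b) for closed sets, in the form needed below.\<close>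
lemma orthomodular_closed:
  assumes A: "closed A" and B: "closed B" and AB: "A \<subseteq> B"
  shows "polar (A \<union> (polar A \<inter> B)) \<subseteq> polar B"
proof -
  have BU: "B \<subseteq> U" using B unfolding closed_def by auto
  consider "A = {}" | "A = B" | "B = U" | "A \<noteq> {}" "A \<noteq> B" "B \<noteq> U" by blast
  then show ?thesis
  proof cases
    case 1 then show ?thesis using BU polar_empty by (simp add: Int_absorb1)
  next
    case 2 then show ?thesis using disjoint_polar by (simp add: Int_commute)
  next
    case 3 then show ?thesis using polar_U polar_union disjoint_polar polar_subset
      by (metis Int_absorb2 Int_commute equalityE)
  next
    case 4
    have "A \<noteq> U" "B \<noteq> {}" using 4 AB BU by auto
    with closed_cases[OF A] closed_cases[OF B] 4
    consider (atoms) x y where "x \<in> U" "y \<in> U" "A = {x}" "B = {y}"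
      | (atom_coatom) x y where "x \<in> U" "y \<in> U" "A = {x}" "B = polar {y}"
      | (coatom_atom) x y where "x \<in> U" "y \<in> U" "A = polar {x}" "B = {y}"
      | (coatoms) x y where "x \<in> U" "y \<in> U" "A = polar {x}" "B = polar {y}"
      by metis
    then show ?thesis
    proof cases
      case atoms then show ?thesis using AB 4 by auto
    next
      case coatom_atom
      obtain p q where "p \<noteq> q" "R p x" "R q x" using two_orth[OF coatom_atom(1)] by blast
      then have "p \<in> A" "q \<in> A" using coatom_atom R_in_U unfolding polar_def by auto
      then show ?thesis using AB coatom_atom \<open>p \<noteq> q\<close> by auto
    next
      case coatoms
      have "polar B \<subseteq> polar A" using polar_anti[OF AB] .
      then have "{y} \<subseteq> {x}" using coatoms polar_polar_atom by simp
      then show ?thesis using coatoms 4 by auto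
    next
      case atom_coatom
      have xy: "R x y" using AB atom_coatom unfolding polar_def by auto
      obtain z where z: "R z x" "R z y" using orth_triple[OF xy] by blast
      have "x \<noteq> y" using xy R_irrefl by auto
      have "polar A \<inter> B = {z}"
      proof
        show "{z} \<subseteq> polar A \<inter> B" using z atom_coatom R_in_U R_sym unfolding polar_def by auto
        show "polar A \<inter> B \<subseteq> {z}"
          using atom_coatom unique_common_orth[OF \<open>x \<noteq> y\<close>] z R_sym unfolding polar_def by auto
      qed
      moreover have "polar {x, z} \<subseteq> {y}"
      proof
        fix w assume "w \<in> polar {x, z}"
        then have "R w x" "R w z" unfolding polar_def by auto
        moreover have "x \<noteq> z" using z R_irrefl by auto
        ultimately show "w \<in> {y}" using unique_common_orth[of x z w y] xy z R_sym by auto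
      qed
      ultimately show ?thesis using atom_coatom polar_polar_atom by (simp add: insert_commute)
    qed
  qed
qed

theorem closed_lattice_orthomodular: "orthomodular closed_lattice"
  unfolding orthomodular_def
proof (intro conjI closed_lattice_ortholattice ballI impI)
  fix a b
  assume "a \<in> carrier closed_lattice" "b \<in> carrier closed_lattice" and ab: "le closed_lattice a b"
  then have A: "closed (set_decode a)" and B: "closed (set_decode b)"
    and AB: "set_decode a \<subseteq> set_decode b"
    by (simp_all add: closed_lattice_simps)
  let ?X = "set_decode a \<union> (polar (set_decode a) \<inter> set_decode b)"
  have "polar (polar (set_decode b)) \<subseteq> polar (polar ?X)"
    using polar_anti[OF orthomodular_closed[OF A B AB]] .
  moreover have "polar (polar ?X) \<subseteq> polar (polar (set_decode b))"
    using AB by (intro polar_anti) auto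
  ultimately show "b = join closed_lattice a (meet closed_lattice (compl closed_lattice a) b)"
    using B unfolding closed_def by (intro closed_lattice_eqI) (simp add: closed_lattice_simps)
qed

end

definition blocks16 :: "nat list list" where
  "blocks16 = [[2,4,13], [5,11,13], [0,3,4], [2,8,15], [6,7,12], [1,8,10], [0,12,14], [8,9,14], [5,6,10]]"

definition orth16 :: "nat \<Rightarrow> nat \<Rightarrow> bool" where
  "orth16 x y \<longleftrightarrow> x \<noteq> y \<and> (\<exists>B\<in>set blocks16. x \<in> set B \<and> y \<in> set B)"

lemma orth16_atoms: "orth16 x y \<Longrightarrow> x \<in> set [0..<16] \<and> y \<in> set [0..<16]"
proof -
  have "\<forall>B\<in>set blocks16. \<forall>x\<in>set B. x < 16" unfolding blocks16_def by code_simp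
  then show "orth16 x y \<Longrightarrow> x \<in> set [0..<16] \<and> y \<in> set [0..<16]" unfolding orth16_def by auto
qed

lemma orth16_checks:
  "\<forall>x\<in>set [0..<16]. \<forall>y\<in>set [0..<16]. orth16 x y \<longrightarrow> orth16 y x"
  "\<forall>x\<in>set [0..<16]. \<forall>y\<in>set [0..<16]. x \<noteq> y \<longrightarrow>
     length (filter (\<lambda>z. orth16 z x \<and> orth16 z y) [0..<16]) \<le> 1"
  "\<forall>x\<in>set [0..<16]. 2 \<le> length (filter (\<lambda>z. orth16 z x) [0..<16])"
  "\<forall>x\<in>set [0..<16]. \<forall>y\<in>set [0..<16]. orth16 x y \<longrightarrow> (\<exists>z\<in>set [0..<16]. orth16 z x \<and> orth16 z y)"
  unfolding orth16_def blocks16_def by code_simp+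

lemma filter_length_le_one_unique:
  assumes "length (filter P xs) \<le> 1" "z \<in> set xs" "w \<in> set xs" "P z" "P w"
  shows "z = w"
proof (rule ccontr)
  assume "z \<noteq> w"
  then have "card {z, w} \<le> card (set (filter P xs))" using assms(2-) by (intro card_mono) auto
  then show False using \<open>z \<noteq> w\<close> card_length[of "filter P xs"] assms(1) by simp
qed

interpretation ex16: greechie_space "{..<16}" orth16
proof
  show "finite {..<16::nat}" by simp
  show "orth16 x y \<Longrightarrow> x \<in> {..<16}" for x y using orth16_atoms by auto
  show "orth16 x y \<Longrightarrow> orth16 y x" for x y using orth16_checks(1) orth16_atoms by blast
  show "\<not> orth16 x x" for x unfolding orth16_def by simp
  show "z = w" if "x \<noteq> y" "orth16 z x" "orth16 z y" "orth16 w x" "orth16 w y" for x y z w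
    using orth16_checks(2) that orth16_atoms
    by (intro filter_length_le_one_unique[of "\<lambda>z. orth16 z x \<and> orth16 z y" "[0..<16]"]) blast+
  show "\<exists>y z. y \<noteq> z \<and> orth16 y x \<and> orth16 z x" if "x \<in> {..<16}" for x
  proof (rule ccontr)
    assume none: "\<not> (\<exists>y z. y \<noteq> z \<and> orth16 y x \<and> orth16 z x)"
    have "2 \<le> length (filter (\<lambda>z. orth16 z x) [0..<16])" using orth16_checks(3) that by simp
    moreover have "length (filter (\<lambda>z. orth16 z x) [0..<16]) = card (set (filter (\<lambda>z. orth16 z x) [0..<16]))"
      by (metis distinct_card distinct_filter distinct_upt)
    moreover have "card (set (filter (\<lambda>z. orth16 z x) [0..<16])) \<le> 1"
      using none by (auto simp: card_le_Suc0_iff_eq)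
    ultimately show False by simp
  qed
  show "\<exists>z. orth16 z x \<and> orth16 z y" if "orth16 x y" for x y
    using orth16_checks(4) orth16_atoms that by blast
qed

text \<open>Complements of the atoms 0, 6, 13: a triple violating 3-Go.\<close>
definition "cex_a = set_encode (ex16.polar (set [0]))"
definition "cex_b = set_encode (ex16.polar (set [6]))"
definition "cex_c = set_encode (ex16.polar (set [13]))"

lemma polar16_set: "ex16.polar (set xs) = set (filter (\<lambda>x. list_all (orth16 x) xs) [0..<16])"
  unfolding ex16.polar_def by (auto simp: list_all_iff)

lemma set_inter_list: "set xs \<inter> set ys = set (filter (\<lambda>x. x \<in> set ys) xs)"
  by auto

text \<open>The atom 8 lies below the forward but not the backward 3-Godowski term.\<close>
lemma godowski3_fails:
  "meet ex16.closed_lattice (imp ex16.closed_lattice cex_a cex_b)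
     (meet ex16.closed_lattice (imp ex16.closed_lattice cex_b cex_c) (imp ex16.closed_lattice cex_c cex_a))
   \<noteq> meet ex16.closed_lattice (imp ex16.closed_lattice cex_c cex_b)
     (meet ex16.closed_lattice (imp ex16.closed_lattice cex_b cex_a) (imp ex16.closed_lattice cex_a cex_c))"
proof
  let ?M = ex16.closed_lattice
  assume eq: "meet ?M (imp ?M cex_a cex_b) (meet ?M (imp ?M cex_b cex_c) (imp ?M cex_c cex_a))
    = meet ?M (imp ?M cex_c cex_b) (meet ?M (imp ?M cex_b cex_a) (imp ?M cex_a cex_c))"
  have "8 \<in> set_decode (meet ?M (imp ?M cex_a cex_b) (meet ?M (imp ?M cex_b cex_c) (imp ?M cex_c cex_a)))"
    unfolding imp_def cex_a_def cex_b_def cex_c_def ex16.decode_closed_lattice set_encode_inverse[OF ex16.finite_polar]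
    by (simp only: polar16_set set_inter_list set_append[symmetric]) code_simp
  moreover have "8 \<notin> set_decode (meet ?M (imp ?M cex_c cex_b) (meet ?M (imp ?M cex_b cex_a) (imp ?M cex_a cex_c)))"
    unfolding imp_def cex_a_def cex_b_def cex_c_def ex16.decode_closed_lattice set_encode_inverse[OF ex16.finite_polar]
    by (simp only: polar16_set set_inter_list set_append[symmetric]) code_simp
  ultimately show False using eq by simp
qed

lemma counterexample_elements: "cex_a \<in> carrier ex16.closed_lattice" "cex_b \<in> carrier ex16.closed_lattice"
  "cex_c \<in> carrier ex16.closed_lattice"
  unfolding cex_a_def cex_b_def cex_c_def ex16.carrier_closed_lattice
  by (simp_all add: ex16.closed_polar ex16.finite_polar)

text \<open>Part (iii): since n-Go implies 3-Go, the example is an orthomodular lattice violating n-Go.\<close>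
theorem orthomodular_without_n_Go:
  assumes "3 \<le> n"
  shows "orthomodular ex16.closed_lattice \<and> \<not> n_Go n ex16.closed_lattice"
proof -
  interpret olat ex16.closed_lattice by (rule olat.intro, rule ex16.closed_lattice_ortholattice)
  show ?thesis
    using ex16.closed_lattice_orthomodular godowski3_fails
      n_Go_three[OF _ assms counterexample_elements] by blast
qed

theorem theorem5p6:
  shows "(\<forall>n::nat. \<forall>L :: 'a ol. n \<ge> 3 \<and> ortholattice L \<and> has_strong_states L \<longrightarrow> n_Go n L)
       \<and> (\<forall>n::nat. \<forall>L :: 'b ol. n \<ge> 3 \<and> ortholattice L \<and> n_Go n L \<longrightarrow> orthomodular L)
       \<and> (\<forall>n::nat. n \<ge> 3 \<longrightarrow> (\<exists>L :: nat ol. orthomodular L \<and> \<not> n_Go n L))"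
proof (intro conjI allI impI)
  fix n :: nat and L :: "'a ol"
  assume "n \<ge> 3 \<and> ortholattice L \<and> has_strong_states L"
  then show "n_Go n L" using olat.strong_states_n_Go[of L n] olat.intro by auto
next
  fix n :: nat and L :: "'b ol"
  assume "n \<ge> 3 \<and> ortholattice L \<and> n_Go n L"
  then show "orthomodular L" using olat.n_Go_orthomodular[of L n] olat.intro by auto
next
  fix n :: nat
  assume "n \<ge> 3"
  then show "\<exists>L :: nat ol. orthomodular L \<and> \<not> n_Go n L" using orthomodular_without_n_Go by blast
qed

end
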